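(* Let $A$ be an algebra such that $\nabla_A\in\mathcal K(A)$ and the commutator of $A$ is distributive w.r.t. the join. Let $\theta\in\mathrm{Con}(A)$ and $\phi\in V_A(\theta)$. Then $\phi$ is a minimal element of $(V_A(\theta),\subseteq)$ if and only if $\nabla_A\setminus\phi$ is a maximal element (w.r.t. inclusion) of the set of $m$-systems of $A$ that are disjoint from $\theta$.
   Context: Let $A$ be an algebra of a fixed signature. $\mathrm{Con}(A)$ is the lattice of congruences of $A$ with bottom $\Delta_A$ and top $\nabla_A=A^2$; $\mathcal K(A)$ is the set of finitely generated (compact) congruences; $Cg_A(a,b)$ is the congruence generated by $(a,b)$. $[\cdot,\cdot]_A$ is the term condition commutator: for $\alpha,\beta,\mu\in\mathrm{Con}(A)$, $C(\alpha,\beta;\mu)$ means that for all $n,k$, every $(n+k)$-ary term $t$, all $(a_i,b_i)\in\alpha$ and $(c_j,d_j)\in\beta$: $(t(\bar a,\bar c),t(\bar a,\bar d))\in\mu$ iff $(t(\bar b,\bar c),t(\bar b,\bar d))\in\mu$; $[\alpha,\beta]_A=\bigcap\{\mu: C(\alpha,\beta;\mu)\}$. "Distributive w.r.t. the join" means $[\alpha\vee\beta,\gamma]_A=[\alpha,\gamma]_A\vee[\beta,\gamma]_A$ and $[\gamma,\alpha\vee\beta]_A=[\gamma,\alpha]_A\vee[\gamma,\beta]_A$. A congruence $\phi\neq\nabla_A$ is prime if $[\alpha,\beta]_A\subseteq\phi$ implies $\alpha\subseteq\phi$ or $\beta\subseteq\phi$; $\mathrm{Spec}(A)$ is the set of prime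 congruences and $V_A(\theta)=\{\phi\in\mathrm{Spec}(A):\theta\subseteq\phi\}$. A subset $S\subseteq A^2$ is an $m$-system iff for all $(a,b),(c,d)\in S$, $[Cg_A(a,b),Cg_A(c,d)]_A\cap S\neq\emptyset$. *)

theory Defs
  imports Main
begin

text \<open>An algebra of a fixed signature is given by a carrier A, an arity
function ar on operation symbols of type 'f, and an interpretation ops, where
ops f is applied to argument lists of length ar f.\<close>

definition is_algebra :: "'a set \<Rightarrow> ('f \<Rightarrow> nat) \<Rightarrow> ('f \<Rightarrow> 'a list \<Rightarrow> 'a) \<Rightarrow> bool" where
  "is_algebra A ar ops \<longleftrightarrow>
     (\<forall>f xs. length xs = ar f \<and> set xs \<subseteq> A \<longrightarrow> ops f xs \<in> A)"

datatype 'f uterm = UVar nat | UFun 'f "'f uterm list"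

fun wf_term :: "('f \<Rightarrow> nat) \<Rightarrow> 'f uterm \<Rightarrow> bool" where
  "wf_term ar (UVar i) = True"
| "wf_term ar (UFun f ts) = (length ts = ar f \<and> (\<forall>t\<in>set ts. wf_term ar t))"

fun term_vars :: "'f uterm \<Rightarrow> nat set" where
  "term_vars (UVar i) = {i}"
| "term_vars (UFun f ts) = (\<Union>t\<in>set ts. term_vars t)"

fun term_eval :: "('f \<Rightarrow> 'a list \<Rightarrow> 'a) \<Rightarrow> (nat \<Rightarrow> 'a) \<Rightarrow> 'f uterm \<Rightarrow> 'a" where
  "term_eval ops \<sigma> (UVar i) = \<sigma> i"
| "term_eval ops \<sigma> (UFun f ts) = ops f (map (term_eval ops \<sigma>) ts)"

definition is_congruence :: "'a set \<Rightarrow> ('f \<Rightarrow> nat) \<Rightarrow> ('f \<Rightarrow> 'a list \<Rightarrow> 'a) \<Rightarrow> 'a rel \<Rightarrow> bool" where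
  "is_congruence A ar ops \<theta> \<longleftrightarrow> equiv A \<theta> \<and>
     (\<forall>f xs ys. length xs = ar f \<and> length ys = ar f \<and> list_all2 (\<lambda>x y. (x, y) \<in> \<theta>) xs ys
        \<longrightarrow> (ops f xs, ops f ys) \<in> \<theta>)"

definition Con :: "'a set \<Rightarrow> ('f \<Rightarrow> nat) \<Rightarrow> ('f \<Rightarrow> 'a list \<Rightarrow> 'a) \<Rightarrow> 'a rel set" where
  "Con A ar ops = {\<theta>. is_congruence A ar ops \<theta>}"

definition Cg_set :: "'a set \<Rightarrow> ('f \<Rightarrow> nat) \<Rightarrow> ('f \<Rightarrow> 'a list \<Rightarrow> 'a) \<Rightarrow> 'a rel \<Rightarrow> 'a rel" where
  "Cg_set A ar ops F = \<Inter>{\<theta> \<in> Con A ar ops. F \<subseteq> \<theta>}"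

definition Cg :: "'a set \<Rightarrow> ('f \<Rightarrow> nat) \<Rightarrow> ('f \<Rightarrow> 'a list \<Rightarrow> 'a) \<Rightarrow> 'a \<Rightarrow> 'a \<Rightarrow> 'a rel" where
  "Cg A ar ops a b = Cg_set A ar ops {(a, b)}"

definition KCon :: "'a set \<Rightarrow> ('f \<Rightarrow> nat) \<Rightarrow> ('f \<Rightarrow> 'a list \<Rightarrow> 'a) \<Rightarrow> 'a rel set" where
  "KCon A ar ops = {\<theta>. \<exists>F. finite F \<and> F \<subseteq> A \<times> A \<and> \<theta> = Cg_set A ar ops F}"

definition con_join :: "'a set \<Rightarrow> ('f \<Rightarrow> nat) \<Rightarrow> ('f \<Rightarrow> 'a list \<Rightarrow> 'a) \<Rightarrow> 'a rel \<Rightarrow> 'a rel \<Rightarrow> 'a rel" where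
  "con_join A ar ops \<alpha> \<beta> = Cg_set A ar ops (\<alpha> \<union> \<beta>)"

definition join_asg :: "nat \<Rightarrow> (nat \<Rightarrow> 'a) \<Rightarrow> (nat \<Rightarrow> 'a) \<Rightarrow> nat \<Rightarrow> 'a" where
  "join_asg n a c = (\<lambda>i. if i < n then a i else c (i - n))"

definition centralizes :: "('f \<Rightarrow> nat) \<Rightarrow> ('f \<Rightarrow> 'a list \<Rightarrow> 'a) \<Rightarrow> 'a rel \<Rightarrow> 'a rel \<Rightarrow> 'a rel \<Rightarrow> bool" where
  "centralizes ar ops \<alpha> \<beta> \<mu> \<longleftrightarrow>
     (\<forall>n k t a b c d. wf_term ar t \<and> term_vars t \<subseteq> {..<n + k}
        \<and> (\<forall>i<n. (a i, b i) \<in> \<alpha>) \<and> (\<forall>j<k. (c j, d j) \<in> \<beta>) \<longrightarrow>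
        ((term_eval ops (join_asg n a c) t, term_eval ops (join_asg n a d) t) \<in> \<mu>
         \<longleftrightarrow> (term_eval ops (join_asg n b c) t, term_eval ops (join_asg n b d) t) \<in> \<mu>))"

definition commutator :: "'a set \<Rightarrow> ('f \<Rightarrow> nat) \<Rightarrow> ('f \<Rightarrow> 'a list \<Rightarrow> 'a) \<Rightarrow> 'a rel \<Rightarrow> 'a rel \<Rightarrow> 'a rel" where
  "commutator A ar ops \<alpha> \<beta> = \<Inter>{\<mu> \<in> Con A ar ops. centralizes ar ops \<alpha> \<beta> \<mu>}"

definition comm_join_distributive :: "'a set \<Rightarrow> ('f \<Rightarrow> nat) \<Rightarrow> ('f \<Rightarrow> 'a list \<Rightarrow> 'a) \<Rightarrow> bool" where
  "comm_join_distributive A ar ops \<longleftrightarrow>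
     (\<forall>\<alpha>\<in>Con A ar ops. \<forall>\<beta>\<in>Con A ar ops. \<forall>\<gamma>\<in>Con A ar ops.
        commutator A ar ops (con_join A ar ops \<alpha> \<beta>) \<gamma>
          = con_join A ar ops (commutator A ar ops \<alpha> \<gamma>) (commutator A ar ops \<beta> \<gamma>)
      \<and> commutator A ar ops \<gamma> (con_join A ar ops \<alpha> \<beta>)
          = con_join A ar ops (commutator A ar ops \<gamma> \<alpha>) (commutator A ar ops \<gamma> \<beta>))"

definition prime_con :: "'a set \<Rightarrow> ('f \<Rightarrow> nat) \<Rightarrow> ('f \<Rightarrow> 'a list \<Rightarrow> 'a) \<Rightarrow> 'a rel \<Rightarrow> bool" where
  "prime_con A ar ops \<phi> \<longleftrightarrow> \<phi> \<in> Con A ar ops \<and> \<phi> \<noteq> A \<times> A \<and>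
     (\<forall>\<alpha>\<in>Con A ar ops. \<forall>\<beta>\<in>Con A ar ops.
        commutator A ar ops \<alpha> \<beta> \<subseteq> \<phi> \<longrightarrow> \<alpha> \<subseteq> \<phi> \<or> \<beta> \<subseteq> \<phi>)"

definition Spec :: "'a set \<Rightarrow> ('f \<Rightarrow> nat) \<Rightarrow> ('f \<Rightarrow> 'a list \<Rightarrow> 'a) \<Rightarrow> 'a rel set" where
  "Spec A ar ops = {\<phi>. prime_con A ar ops \<phi>}"

definition V :: "'a set \<Rightarrow> ('f \<Rightarrow> nat) \<Rightarrow> ('f \<Rightarrow> 'a list \<Rightarrow> 'a) \<Rightarrow> 'a rel \<Rightarrow> 'a rel set" where
  "V A ar ops \<theta> = {\<phi> \<in> Spec A ar ops. \<theta> \<subseteq> \<phi>}"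

definition m_system :: "'a set \<Rightarrow> ('f \<Rightarrow> nat) \<Rightarrow> ('f \<Rightarrow> 'a list \<Rightarrow> 'a) \<Rightarrow> 'a rel \<Rightarrow> bool" where
  "m_system A ar ops S \<longleftrightarrow> S \<subseteq> A \<times> A \<and>
     (\<forall>a b c d. (a, b) \<in> S \<and> (c, d) \<in> S \<longrightarrow>
        commutator A ar ops (Cg A ar ops a b) (Cg A ar ops c d) \<inter> S \<noteq> {})"

definition minimal_in :: "'b set \<Rightarrow> 'b set set \<Rightarrow> bool" where
  "minimal_in x M \<longleftrightarrow> x \<in> M \<and> (\<forall>y\<in>M. y \<subseteq> x \<longrightarrow> y = x)"

definition maximal_in :: "'b set \<Rightarrow> 'b set set \<Rightarrow> bool" where
  "maximal_in x M \<longleftrightarrow> x \<in> M \<and> (\<forall>y\<in>M. x \<subseteq> y \<longrightarrow> y = x)"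

end

(*
  Since \<phi> \<mapsto> A \<times> A - \<phi> reverses inclusion and the complement of a prime
  congruence above \<theta> is an m-system disjoint from \<theta>, everything reduces to:
  every nonempty m-system S disjoint from \<theta> avoids some prime \<psi> \<supseteq> \<theta>.
  Take \<psi> \<supseteq> \<theta> maximal with \<psi> \<inter> S = {} (Zorn). If neither \<alpha> nor \<beta> is below \<psi>,
  \<psi> \<or> \<alpha> and \<psi> \<or> \<beta> contain pairs of S whose principal congruences have a
  commutator meeting S, while join-distributivity gives
  [\<psi> \<or> \<alpha>, \<psi> \<or> \<beta>] \<subseteq> \<psi> \<or> [\<alpha>, \<beta>]; so [\<alpha>, \<beta>] \<subseteq> \<psi> is impossible.
*)

theory Submission
  imports Defs
begin

lemma Con_subset: "\<theta> \<in> Con A ar ops \<Longrightarrow> \<theta> \<subseteq> A \<times> A"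
  by (simp add: Con_def is_congruence_def equiv_def refl_on_def)

lemma Con_refl: "\<theta> \<in> Con A ar ops \<Longrightarrow> x \<in> A \<Longrightarrow> (x, x) \<in> \<theta>"
  by (simp add: Con_def is_congruence_def equiv_def refl_on_def)

lemma Con_sym: "\<theta> \<in> Con A ar ops \<Longrightarrow> (x, y) \<in> \<theta> \<Longrightarrow> (y, x) \<in> \<theta>"
  unfolding Con_def is_congruence_def equiv_def sym_def by blast

lemma Con_trans: "\<theta> \<in> Con A ar ops \<Longrightarrow> (x, y) \<in> \<theta> \<Longrightarrow> (y, z) \<in> \<theta> \<Longrightarrow> (x, z) \<in> \<theta>"
  unfolding Con_def is_congruence_def equiv_def trans_def by blast

lemma Con_compatible:
  "\<theta> \<in> Con A ar ops \<Longrightarrow> length xs = ar f \<Longrightarrow> length ys = ar f \<Longrightarrow>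
   list_all2 (\<lambda>x y. (x, y) \<in> \<theta>) xs ys \<Longrightarrow> (ops f xs, ops f ys) \<in> \<theta>"
  unfolding Con_def is_congruence_def by blast

lemma ConI:
  assumes "\<theta> \<subseteq> A \<times> A" "\<And>x. x \<in> A \<Longrightarrow> (x, x) \<in> \<theta>"
    and "\<And>x y. (x, y) \<in> \<theta> \<Longrightarrow> (y, x) \<in> \<theta>"
    and "\<And>x y z. (x, y) \<in> \<theta> \<Longrightarrow> (y, z) \<in> \<theta> \<Longrightarrow> (x, z) \<in> \<theta>"
    and "\<And>f xs ys. length xs = ar f \<Longrightarrow> length ys = ar f \<Longrightarrow>
           list_all2 (\<lambda>x y. (x, y) \<in> \<theta>) xs ys \<Longrightarrow> (ops f xs, ops f ys) \<in> \<theta>"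
  shows "\<theta> \<in> Con A ar ops"
  using assms unfolding Con_def is_congruence_def equiv_def refl_on_def sym_def trans_def
  by blast

lemma Con_full:
  assumes "is_algebra A ar ops"
  shows "A \<times> A \<in> Con A ar ops"
proof (rule ConI)
  fix f xs ys
  assume "length xs = ar f" "length ys = ar f" "list_all2 (\<lambda>x y. (x, y) \<in> A \<times> A) xs ys"
  moreover from this have "set xs \<subseteq> A" "set ys \<subseteq> A"
    by (auto simp: list_all2_conv_all_nth in_set_conv_nth)
  ultimately show "(ops f xs, ops f ys) \<in> A \<times> A"
    using assms unfolding is_algebra_def by blast
qed auto

lemma Con_Inter:
  assumes "M \<subseteq> Con A ar ops" "M \<noteq> {}"
  shows "\<Inter>M \<in> Con A ar ops"
proof (rule ConI)
  obtain \<mu> where "\<mu> \<in> M" using assms(2) by blast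
  then show "\<Inter>M \<subseteq> A \<times> A" using assms(1) Con_subset[of \<mu>] by blast
next
  fix f xs ys
  assume len: "length xs = ar f" "length ys = ar f"
    and rel: "list_all2 (\<lambda>x y. (x, y) \<in> \<Inter>M) xs ys"
  show "(ops f xs, ops f ys) \<in> \<Inter>M"
  proof
    fix \<mu> assume "\<mu> \<in> M"
    have "list_all2 (\<lambda>x y. (x, y) \<in> \<mu>) xs ys"
      by (rule list_all2_mono[OF rel]) (use \<open>\<mu> \<in> M\<close> in blast)
    with \<open>\<mu> \<in> M\<close> assms(1) len show "(ops f xs, ops f ys) \<in> \<mu>"
      by (blast intro: Con_compatible)
  qed
next
  fix x assume "x \<in> A"
  then show "(x, x) \<in> \<Inter>M" using assms(1) Con_refl[of _ A ar ops] by blast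
next
  fix x y assume "(x, y) \<in> \<Inter>M"
  then show "(y, x) \<in> \<Inter>M" using assms(1) Con_sym[of _ A ar ops] by blast
next
  fix x y z assume "(x, y) \<in> \<Inter>M" "(y, z) \<in> \<Inter>M"
  then show "(x, z) \<in> \<Inter>M" using assms(1) Con_trans[of _ A ar ops] by blast
qed

lemma Con_Union_chain:
  assumes "C \<noteq> {}" "subset.chain (Con A ar ops) C"
  shows "\<Union>C \<in> Con A ar ops"
proof -
  have C: "C \<subseteq> Con A ar ops" using assms(2) unfolding subset.chain_def by blast
  have in_member: "\<exists>\<mu>\<in>C. P \<subseteq> \<mu>" if "finite P" "P \<subseteq> \<Union>C" for P
    using finite_subset_Union_chain[OF that assms] by blast
  show ?thesis
  proof (rule ConI)
    fix x y z assume xy: "(x, y) \<in> \<Union>C" and yz: "(y, z) \<in> \<Union>C"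
    have "\<exists>\<mu>\<in>C. {(x, y), (y, z)} \<subseteq> \<mu>"
      by (rule in_member) (use xy yz in simp_all)
    then obtain \<mu> where "\<mu> \<in> C" "{(x, y), (y, z)} \<subseteq> \<mu>" ..
    with C have "(x, z) \<in> \<mu>" by (blast intro: Con_trans)
    with \<open>\<mu> \<in> C\<close> show "(x, z) \<in> \<Union>C" by blast
  next
    fix f xs ys
    assume len: "length xs = ar f" "length ys = ar f"
      and rel: "list_all2 (\<lambda>x y. (x, y) \<in> \<Union>C) xs ys"
    then have "set (zip xs ys) \<subseteq> \<Union>C"
      by (auto simp: list_all2_iff)
    then obtain \<mu> where "\<mu> \<in> C" "set (zip xs ys) \<subseteq> \<mu>"
      using in_member[OF finite_set] by blast
    with rel have "list_all2 (\<lambda>x y. (x, y) \<in> \<mu>) xs ys"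
      by (auto simp: list_all2_iff)
    with \<open>\<mu> \<in> C\<close> C len have "(ops f xs, ops f ys) \<in> \<mu>"
      by (blast intro: Con_compatible)
    with \<open>\<mu> \<in> C\<close> show "(ops f xs, ops f ys) \<in> \<Union>C" by blast
  next
    show "\<Union>C \<subseteq> A \<times> A" using C by (blast dest: Con_subset)
  next
    fix x assume "x \<in> A"
    obtain \<mu> where "\<mu> \<in> C" using assms(1) by blast
    with C \<open>x \<in> A\<close> show "(x, x) \<in> \<Union>C" by (blast intro: Con_refl)
  next
    fix x y assume "(x, y) \<in> \<Union>C"
    with C show "(y, x) \<in> \<Union>C" by (blast intro: Con_sym)
  qed
qed

lemma Cg_set_Con:
  "is_algebra A ar ops \<Longrightarrow> F \<subseteq> A \<times> A \<Longrightarrow> Cg_set A ar ops F \<in> Con A ar ops"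
  unfolding Cg_set_def by (rule Con_Inter) (auto dest: Con_full)

lemma Cg_set_upper: "F \<subseteq> Cg_set A ar ops F"
  unfolding Cg_set_def by blast

lemma Cg_set_least: "\<mu> \<in> Con A ar ops \<Longrightarrow> F \<subseteq> \<mu> \<Longrightarrow> Cg_set A ar ops F \<subseteq> \<mu>"
  unfolding Cg_set_def by blast

lemma con_join_Con:
  "is_algebra A ar ops \<Longrightarrow> \<alpha> \<in> Con A ar ops \<Longrightarrow> \<beta> \<in> Con A ar ops
   \<Longrightarrow> con_join A ar ops \<alpha> \<beta> \<in> Con A ar ops"
  unfolding con_join_def by (intro Cg_set_Con) (auto dest: Con_subset)

lemma con_join_upper: "\<alpha> \<union> \<beta> \<subseteq> con_join A ar ops \<alpha> \<beta>"
  unfolding con_join_def by (rule Cg_set_upper)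

lemma con_join_least:
  "\<mu> \<in> Con A ar ops \<Longrightarrow> \<alpha> \<subseteq> \<mu> \<Longrightarrow> \<beta> \<subseteq> \<mu> \<Longrightarrow> con_join A ar ops \<alpha> \<beta> \<subseteq> \<mu>"
  unfolding con_join_def by (rule Cg_set_least) auto

lemma Cg_Con: "is_algebra A ar ops \<Longrightarrow> a \<in> A \<Longrightarrow> b \<in> A \<Longrightarrow> Cg A ar ops a b \<in> Con A ar ops"
  unfolding Cg_def by (rule Cg_set_Con) auto

lemma Cg_generator: "(a, b) \<in> Cg A ar ops a b"
  unfolding Cg_def using Cg_set_upper by blast

lemma Cg_least: "\<mu> \<in> Con A ar ops \<Longrightarrow> (a, b) \<in> \<mu> \<Longrightarrow> Cg A ar ops a b \<subseteq> \<mu>"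
  unfolding Cg_def by (rule Cg_set_least) auto

lemma term_eval_compatible:
  assumes "\<mu> \<in> Con A ar ops" "wf_term ar t" "\<And>i. i \<in> term_vars t \<Longrightarrow> (\<sigma> i, \<tau> i) \<in> \<mu>"
  shows "(term_eval ops \<sigma> t, term_eval ops \<tau> t) \<in> \<mu>"
  using assms(2,3)
proof (induction t)
  case (UFun f ts)
  then have "list_all2 (\<lambda>x y. (x, y) \<in> \<mu>) (map (term_eval ops \<sigma>) ts) (map (term_eval ops \<tau>) ts)"
    by (auto simp: list_all2_map1 list_all2_map2 intro!: list.rel_refl_strong)
  with UFun.prems show ?case using Con_compatible[OF assms(1)] by simp
qed simp

lemma term_eval_join_asg_related:
  assumes "\<mu> \<in> Con A ar ops" "wf_term ar t" "term_vars t \<subseteq> {..<n + k}"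
    and "\<And>i. i < n \<Longrightarrow> (a i, b i) \<in> \<mu>" "\<And>j. j < k \<Longrightarrow> (c j, d j) \<in> \<mu>"
  shows "(term_eval ops (join_asg n a c) t, term_eval ops (join_asg n b d) t) \<in> \<mu>"
  using assms by (intro term_eval_compatible[OF assms(1,2)]) (auto simp: join_asg_def)

lemma centralizes_left:
  assumes \<alpha>: "\<alpha> \<in> Con A ar ops" and \<beta>: "\<beta> \<in> Con A ar ops"
  shows "centralizes ar ops \<alpha> \<beta> \<alpha>"
  unfolding centralizes_def
proof (intro allI impI)
  fix n k t a b c d
  assume "wf_term ar t \<and> term_vars t \<subseteq> {..<n + k} \<and> (\<forall>i<n. (a i, b i) \<in> \<alpha>)
    \<and> (\<forall>j<k. (c j, d j) \<in> \<beta>)"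
  then have t: "wf_term ar t" "term_vars t \<subseteq> {..<n + k}"
    and ab: "\<And>i. i < n \<Longrightarrow> (a i, b i) \<in> \<alpha>" and cd: "\<And>j. j < k \<Longrightarrow> (c j, d j) \<in> \<beta>"
    by blast+
  have cc: "(c j, c j) \<in> \<alpha>" and dd: "(d j, d j) \<in> \<alpha>" if "j < k" for j
    using cd[OF that] Con_subset[OF \<beta>] Con_refl[OF \<alpha>] by blast+
  have "(term_eval ops (join_asg n a c) t, term_eval ops (join_asg n b c) t) \<in> \<alpha>"
    by (rule term_eval_join_asg_related[OF \<alpha> t ab cc])
  moreover have "(term_eval ops (join_asg n a d) t, term_eval ops (join_asg n b d) t) \<in> \<alpha>"
    by (rule term_eval_join_asg_related[OF \<alpha> t ab dd])
  ultimately show "((term_eval ops (join_asg n a c) t, term_eval ops (join_asg n a d) t) \<in> \<alpha>) =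
      ((term_eval ops (join_asg n b c) t, term_eval ops (join_asg n b d) t) \<in> \<alpha>)"
    by (meson Con_sym[OF \<alpha>] Con_trans[OF \<alpha>])
qed

lemma centralizes_right:
  assumes \<alpha>: "\<alpha> \<in> Con A ar ops" and \<beta>: "\<beta> \<in> Con A ar ops"
  shows "centralizes ar ops \<alpha> \<beta> \<beta>"
  unfolding centralizes_def
proof (intro allI impI)
  fix n k t a b c d
  assume "wf_term ar t \<and> term_vars t \<subseteq> {..<n + k} \<and> (\<forall>i<n. (a i, b i) \<in> \<alpha>)
    \<and> (\<forall>j<k. (c j, d j) \<in> \<beta>)"
  then have t: "wf_term ar t" "term_vars t \<subseteq> {..<n + k}"
    and ab: "\<And>i. i < n \<Longrightarrow> (a i, b i) \<in> \<alpha>" and cd: "\<And>j. j < k \<Longrightarrow> (c j, d j) \<in> \<beta>"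
    by blast+
  have aa: "(a i, a i) \<in> \<beta>" and bb: "(b i, b i) \<in> \<beta>" if "i < n" for i
    using ab[OF that] Con_subset[OF \<alpha>] Con_refl[OF \<beta>] by blast+
  have "(term_eval ops (join_asg n a c) t, term_eval ops (join_asg n a d) t) \<in> \<beta>"
    by (rule term_eval_join_asg_related[OF \<beta> t aa cd])
  moreover have "(term_eval ops (join_asg n b c) t, term_eval ops (join_asg n b d) t) \<in> \<beta>"
    by (rule term_eval_join_asg_related[OF \<beta> t bb cd])
  ultimately show "((term_eval ops (join_asg n a c) t, term_eval ops (join_asg n a d) t) \<in> \<beta>) =
      ((term_eval ops (join_asg n b c) t, term_eval ops (join_asg n b d) t) \<in> \<beta>)"
    by blast
qed

lemma commutator_le_left:
  "\<alpha> \<in> Con A ar ops \<Longrightarrow> \<beta> \<in> Con A ar ops \<Longrightarrow> commutator A ar ops \<alpha> \<beta> \<subseteq> \<alpha>"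
  unfolding commutator_def using centralizes_left by blast

lemma commutator_le_right:
  "\<alpha> \<in> Con A ar ops \<Longrightarrow> \<beta> \<in> Con A ar ops \<Longrightarrow> commutator A ar ops \<alpha> \<beta> \<subseteq> \<beta>"
  unfolding commutator_def using centralizes_right by blast

lemma centralizes_antimono:
  assumes "centralizes ar ops \<alpha>' \<beta>' \<mu>" "\<alpha> \<subseteq> \<alpha>'" "\<beta> \<subseteq> \<beta>'"
  shows "centralizes ar ops \<alpha> \<beta> \<mu>"
  unfolding centralizes_def
proof (intro allI impI)
  fix n k t a b c d
  assume "wf_term ar t \<and> term_vars t \<subseteq> {..<n + k} \<and> (\<forall>i<n. (a i, b i) \<in> \<alpha>)
    \<and> (\<forall>j<k. (c j, d j) \<in> \<beta>)"
  with assms(2,3) have "wf_term ar t \<and> term_vars t \<subseteq> {..<n + k} \<and> (\<forall>i<n. (a i, b i) \<in> \<alpha>')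
    \<and> (\<forall>j<k. (c j, d j) \<in> \<beta>')"
    by blast
  with assms(1) show "((term_eval ops (join_asg n a c) t, term_eval ops (join_asg n a d) t) \<in> \<mu>) =
      ((term_eval ops (join_asg n b c) t, term_eval ops (join_asg n b d) t) \<in> \<mu>)"
    unfolding centralizes_def by blast
qed

lemma commutator_mono:
  "\<alpha> \<subseteq> \<alpha>' \<Longrightarrow> \<beta> \<subseteq> \<beta>' \<Longrightarrow> commutator A ar ops \<alpha> \<beta> \<subseteq> commutator A ar ops \<alpha>' \<beta>'"
  unfolding commutator_def using centralizes_antimono by blast

lemma commutator_Con:
  assumes "\<alpha> \<in> Con A ar ops" "\<beta> \<in> Con A ar ops"
  shows "commutator A ar ops \<alpha> \<beta> \<in> Con A ar ops"
  unfolding commutator_def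
proof (rule Con_Inter)
  show "{\<mu> \<in> Con A ar ops. centralizes ar ops \<alpha> \<beta> \<mu>} \<noteq> {}"
    using assms centralizes_left by blast
qed blast

lemma commutator_join_distrib:
  assumes "comm_join_distributive A ar ops"
    and "\<alpha> \<in> Con A ar ops" "\<beta> \<in> Con A ar ops" "\<gamma> \<in> Con A ar ops"
  shows "commutator A ar ops (con_join A ar ops \<alpha> \<beta>) \<gamma>
           = con_join A ar ops (commutator A ar ops \<alpha> \<gamma>) (commutator A ar ops \<beta> \<gamma>)"
    and "commutator A ar ops \<gamma> (con_join A ar ops \<alpha> \<beta>)
           = con_join A ar ops (commutator A ar ops \<gamma> \<alpha>) (commutator A ar ops \<gamma> \<beta>)"
  using assms unfolding comm_join_distributive_def by blast+

lemma commutator_con_join_le: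
  assumes alg: "is_algebra A ar ops" and dist: "comm_join_distributive A ar ops"
    and \<psi>: "\<psi> \<in> Con A ar ops" and \<alpha>: "\<alpha> \<in> Con A ar ops" and \<beta>: "\<beta> \<in> Con A ar ops"
  shows "commutator A ar ops (con_join A ar ops \<psi> \<alpha>) (con_join A ar ops \<psi> \<beta>)
           \<subseteq> con_join A ar ops \<psi> (commutator A ar ops \<alpha> \<beta>)"
proof -
  let ?J = "con_join A ar ops \<psi> (commutator A ar ops \<alpha> \<beta>)"
  have \<psi>\<beta>: "con_join A ar ops \<psi> \<beta> \<in> Con A ar ops" by (rule con_join_Con[OF alg \<psi> \<beta>])
  have J: "?J \<in> Con A ar ops" by (rule con_join_Con[OF alg \<psi> commutator_Con[OF \<alpha> \<beta>]])
  have "\<psi> \<subseteq> ?J" "commutator A ar ops \<alpha> \<beta> \<subseteq> ?J"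
    using con_join_upper by blast+
  then have "commutator A ar ops \<psi> (con_join A ar ops \<psi> \<beta>) \<subseteq> ?J"
    and "commutator A ar ops \<alpha> (con_join A ar ops \<psi> \<beta>) \<subseteq> ?J"
    using commutator_le_left[OF \<psi> \<psi>\<beta>] commutator_le_right[OF \<alpha> \<psi>]
      commutator_join_distrib(2)[OF dist \<psi> \<beta> \<alpha>] con_join_least[OF J]
    by auto
  then show ?thesis
    using commutator_join_distrib(1)[OF dist \<psi> \<alpha> \<psi>\<beta>] con_join_least[OF J] by simp
qed

lemma m_system_subset: "m_system A ar ops S \<Longrightarrow> S \<subseteq> A \<times> A"
  unfolding m_system_def by blast

lemma prime_if_maximal_disjoint_from_m_system:
  assumes alg: "is_algebra A ar ops" and dist: "comm_join_distributive A ar ops"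
    and S: "m_system A ar ops S" "S \<noteq> {}"
    and \<psi>: "\<psi> \<in> Con A ar ops" "\<psi> \<inter> S = {}"
    and maximal: "\<And>\<mu>. \<mu> \<in> Con A ar ops \<Longrightarrow> \<psi> \<subseteq> \<mu> \<Longrightarrow> \<mu> \<inter> S = {} \<Longrightarrow> \<mu> = \<psi>"
  shows "prime_con A ar ops \<psi>"
proof -
  have meets: "\<exists>x y. (x, y) \<in> S \<and> Cg A ar ops x y \<subseteq> con_join A ar ops \<psi> \<alpha>"
    if \<alpha>: "\<alpha> \<in> Con A ar ops" "\<not> \<alpha> \<subseteq> \<psi>" for \<alpha>
  proof -
    have J: "con_join A ar ops \<psi> \<alpha> \<in> Con A ar ops" by (rule con_join_Con[OF alg \<psi>(1) \<alpha>(1)])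
    have "\<psi> \<union> \<alpha> \<subseteq> con_join A ar ops \<psi> \<alpha>" by (rule con_join_upper)
    with \<alpha>(2) maximal[OF J] have "con_join A ar ops \<psi> \<alpha> \<inter> S \<noteq> {}" by blast
    then obtain x y where "(x, y) \<in> S" "(x, y) \<in> con_join A ar ops \<psi> \<alpha>" by auto
    with Cg_least[OF J] show ?thesis by blast
  qed
  have "\<psi> \<noteq> A \<times> A"
    using S(2) \<psi>(2) m_system_subset[OF S(1)] by blast
  moreover have "\<alpha> \<subseteq> \<psi> \<or> \<beta> \<subseteq> \<psi>"
    if \<alpha>: "\<alpha> \<in> Con A ar ops" and \<beta>: "\<beta> \<in> Con A ar ops"
      and comm: "commutator A ar ops \<alpha> \<beta> \<subseteq> \<psi>" for \<alpha> \<beta>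
  proof (rule ccontr)
    assume "\<not> (\<alpha> \<subseteq> \<psi> \<or> \<beta> \<subseteq> \<psi>)"
    then obtain x y u v where xy: "(x, y) \<in> S" "Cg A ar ops x y \<subseteq> con_join A ar ops \<psi> \<alpha>"
      and uv: "(u, v) \<in> S" "Cg A ar ops u v \<subseteq> con_join A ar ops \<psi> \<beta>"
      using meets \<alpha> \<beta> by metis
    have "commutator A ar ops (Cg A ar ops x y) (Cg A ar ops u v)
        \<subseteq> commutator A ar ops (con_join A ar ops \<psi> \<alpha>) (con_join A ar ops \<psi> \<beta>)"
      using xy(2) uv(2) by (rule commutator_mono)
    also have "\<dots> \<subseteq> con_join A ar ops \<psi> (commutator A ar ops \<alpha> \<beta>)"
      by (rule commutator_con_join_le[OF alg dist \<psi>(1) \<alpha> \<beta>])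
    also have "\<dots> \<subseteq> \<psi>"
      using con_join_least[OF \<psi>(1) _ comm] by blast
    finally show False
      using S(1) xy(1) uv(1) \<psi>(2) unfolding m_system_def by blast
  qed
  ultimately show ?thesis
    unfolding prime_con_def using \<psi>(1) by blast
qed

lemma prime_disjoint_from_m_system_exists:
  assumes alg: "is_algebra A ar ops" and dist: "comm_join_distributive A ar ops"
    and \<theta>: "\<theta> \<in> Con A ar ops" and S: "m_system A ar ops S" "S \<noteq> {}" "S \<inter> \<theta> = {}"
  obtains \<psi> where "prime_con A ar ops \<psi>" "\<theta> \<subseteq> \<psi>" "\<psi> \<inter> S = {}"
proof -
  define F where "F = {\<mu> \<in> Con A ar ops. \<theta> \<subseteq> \<mu> \<and> \<mu> \<inter> S = {}}"
  have "\<exists>\<psi>\<in>F. \<forall>\<mu>\<in>F. \<psi> \<subseteq> \<mu> \<longrightarrow> \<mu> = \<psi>"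
  proof (rule subset_Zorn_nonempty)
    show "F \<noteq> {}" using \<theta> S(3) unfolding F_def by blast
  next
    fix C assume C: "C \<noteq> {}" "subset.chain F C"
    then have "C \<subseteq> F" unfolding subset.chain_def by blast
    from C have "subset.chain (Con A ar ops) C"
      unfolding F_def subset.chain_def by blast
    with C(1) have "\<Union>C \<in> Con A ar ops" by (rule Con_Union_chain)
    with \<open>C \<subseteq> F\<close> C(1) show "\<Union>C \<in> F"
      unfolding F_def by blast
  qed
  then obtain \<psi> where "\<psi> \<in> F" and maximal: "\<And>\<mu>. \<mu> \<in> F \<Longrightarrow> \<psi> \<subseteq> \<mu> \<Longrightarrow> \<mu> = \<psi>"
    by blast
  then have \<psi>: "\<psi> \<in> Con A ar ops" "\<theta> \<subseteq> \<psi>" "\<psi> \<inter> S = {}"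
    unfolding F_def by blast+
  have "prime_con A ar ops \<psi>"
  proof (rule prime_if_maximal_disjoint_from_m_system[OF alg dist S(1,2) \<psi>(1,3)])
    fix \<mu> assume "\<mu> \<in> Con A ar ops" "\<psi> \<subseteq> \<mu>" "\<mu> \<inter> S = {}"
    with \<psi>(2) show "\<mu> = \<psi>" using maximal unfolding F_def by blast
  qed
  with \<psi> show thesis using that by blast
qed

lemma m_system_Diff_prime:
  assumes alg: "is_algebra A ar ops" and \<phi>: "prime_con A ar ops \<phi>"
  shows "m_system A ar ops (A \<times> A - \<phi>)"
  unfolding m_system_def
proof (intro conjI allI impI)
  fix a b c d assume "(a, b) \<in> A \<times> A - \<phi> \<and> (c, d) \<in> A \<times> A - \<phi>"
  then have ab: "a \<in> A" "b \<in> A" "(a, b) \<notin> \<phi>" and cd: "c \<in> A" "d \<in> A" "(c, d) \<notin> \<phi>"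
    by blast+
  have Cg: "Cg A ar ops a b \<in> Con A ar ops" "Cg A ar ops c d \<in> Con A ar ops"
    using Cg_Con[OF alg] ab cd by blast+
  have "\<not> Cg A ar ops a b \<subseteq> \<phi>" "\<not> Cg A ar ops c d \<subseteq> \<phi>"
    using ab(3) cd(3) Cg_generator[of a b] Cg_generator[of c d] by blast+
  with \<phi> Cg have "\<not> commutator A ar ops (Cg A ar ops a b) (Cg A ar ops c d) \<subseteq> \<phi>"
    unfolding prime_con_def by blast
  moreover have "commutator A ar ops (Cg A ar ops a b) (Cg A ar ops c d) \<subseteq> A \<times> A"
    using commutator_le_left[OF Cg] Con_subset[OF Cg(1)] by blast
  ultimately show "commutator A ar ops (Cg A ar ops a b) (Cg A ar ops c d) \<inter> (A \<times> A - \<phi>) \<noteq> {}"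
    by blast
qed blast

lemma V_iff: "\<phi> \<in> V A ar ops \<theta> \<longleftrightarrow> prime_con A ar ops \<phi> \<and> \<theta> \<subseteq> \<phi>"
  unfolding V_def Spec_def by blast

lemma prime_subset_full: "prime_con A ar ops \<phi> \<Longrightarrow> \<phi> \<subseteq> A \<times> A"
  unfolding prime_con_def by (blast dest: Con_subset)

lemma maximal_m_system_if_minimal_prime:
  assumes alg: "is_algebra A ar ops" and dist: "comm_join_distributive A ar ops"
    and \<theta>: "\<theta> \<in> Con A ar ops" and minimal: "minimal_in \<phi> (V A ar ops \<theta>)"
  shows "maximal_in (A \<times> A - \<phi>) {S. m_system A ar ops S \<and> S \<inter> \<theta> = {}}"
  unfolding maximal_in_def
proof (intro conjI ballI impI)
  have \<phi>: "prime_con A ar ops \<phi>" "\<theta> \<subseteq> \<phi>"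
    using minimal unfolding minimal_in_def V_iff by blast+
  then show "A \<times> A - \<phi> \<in> {S. m_system A ar ops S \<and> S \<inter> \<theta> = {}}"
    using m_system_Diff_prime[OF alg \<phi>(1)] by blast
  fix S assume "S \<in> {S. m_system A ar ops S \<and> S \<inter> \<theta> = {}}" and sup: "A \<times> A - \<phi> \<subseteq> S"
  then have S: "m_system A ar ops S" "S \<inter> \<theta> = {}" by blast+
  have "\<phi> \<noteq> A \<times> A" using \<phi>(1) unfolding prime_con_def by blast
  with sup prime_subset_full[OF \<phi>(1)] have "S \<noteq> {}" by blast
  then obtain \<psi> where \<psi>: "prime_con A ar ops \<psi>" "\<theta> \<subseteq> \<psi>" "\<psi> \<inter> S = {}"
    by (rule prime_disjoint_from_m_system_exists[OF alg dist \<theta> S(1) _ S(2)])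
  have "\<psi> \<subseteq> \<phi>"
    using \<psi>(3) sup prime_subset_full[OF \<psi>(1)] by blast
  moreover have "\<psi> \<in> V A ar ops \<theta>" using \<psi>(1,2) unfolding V_iff by blast
  ultimately have "\<psi> = \<phi>"
    using minimal unfolding minimal_in_def by blast
  with \<psi>(3) sup m_system_subset[OF S(1)] show "S = A \<times> A - \<phi>"
    by blast
qed

lemma minimal_prime_if_maximal_m_system:
  assumes alg: "is_algebra A ar ops" and \<phi>: "\<phi> \<in> V A ar ops \<theta>"
    and maximal: "maximal_in (A \<times> A - \<phi>) {S. m_system A ar ops S \<and> S \<inter> \<theta> = {}}"
  shows "minimal_in \<phi> (V A ar ops \<theta>)"
  unfolding minimal_in_def
proof (intro conjI ballI impI)
  show "\<phi> \<in> V A ar ops \<theta>" by (fact \<phi>)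
  fix \<psi> assume "\<psi> \<in> V A ar ops \<theta>" and "\<psi> \<subseteq> \<phi>"
  then have \<psi>: "prime_con A ar ops \<psi>" "\<theta> \<subseteq> \<psi>" unfolding V_iff by blast+
  have "A \<times> A - \<psi> \<in> {S. m_system A ar ops S \<and> S \<inter> \<theta> = {}}"
    using m_system_Diff_prime[OF alg \<psi>(1)] \<psi>(2) by blast
  moreover have "A \<times> A - \<phi> \<subseteq> A \<times> A - \<psi>" using \<open>\<psi> \<subseteq> \<phi>\<close> by blast
  ultimately have "A \<times> A - \<psi> = A \<times> A - \<phi>"
    using maximal unfolding maximal_in_def by blast
  moreover have "\<phi> \<subseteq> A \<times> A" using \<phi> prime_subset_full unfolding V_iff by blast
  ultimately show "\<psi> = \<phi>"
    using prime_subset_full[OF \<psi>(1)] by blast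
qed

theorem mainTheorem7:
  fixes A :: "'a set" and ar :: "'f \<Rightarrow> nat" and ops :: "'f \<Rightarrow> 'a list \<Rightarrow> 'a"
    and \<theta> \<phi> :: "'a rel"
  assumes "is_algebra A ar ops"
    and "A \<times> A \<in> KCon A ar ops"
    and "comm_join_distributive A ar ops"
    and "\<theta> \<in> Con A ar ops"
    and "\<phi> \<in> V A ar ops \<theta>"
  shows "minimal_in \<phi> (V A ar ops \<theta>) \<longleftrightarrow>
         maximal_in (A \<times> A - \<phi>) {S. m_system A ar ops S \<and> S \<inter> \<theta> = {}}"
  using maximal_m_system_if_minimal_prime[OF assms(1,3,4)]
    minimal_prime_if_maximal_m_system[OF assms(1,5)]
  by blast

end
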